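(* Let $G$ be a groupoid that is a generalised inflation of its subgroupoid $U$, and suppose that $G$ is a right modular groupoid and that $U$ has a left identity element $1$ (i.e. $1\cdot u = u$ for all $u \in U$). Then $G$ is an inflation of $U$.
   Context: A groupoid is a set with a binary operation, written $xy$ or $x\cdot y$. A groupoid $G$ is right modular if $xy\cdot z = zy\cdot x$ for all $x,y,z \in G$. A groupoid $G$ is an inflation of its subgroupoid $U$ if $G = \bigcup_{u\in U} G_u$ where (1) $u \in G_u$ for all $u\in U$, (2) $G_u \cap G_v = \emptyset$ for $u \ne v$, and (3) $x \in G_u$, $y\in G_v$ implies $xy = uv$. A groupoid $G$ is a generalised inflation of its subgroupoid $U$ if $G = \bigcup_{u\in U} G_u$ where (1) $u \in G_u$ for all $u \in U$, (2) $G_u\cap G_v=\emptyset$ for $u\neq v$, (3) for every $x \in G$ there are maps $\alpha_x, \beta_x : U \to U$ such that for all $x \in G_u$ and $y \in G_v$ ($u,v\in U$) one has $xy = \alpha_x(v)\cdot \beta_y(u)$ (product computed in $U$), and (4) for $u \in U$, $\alpha_u$ and $\beta_u$ are both the constant map on $U$ with value $u$. *)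

theory Defs
  imports Main
begin

definition groupoid :: "'a set \<Rightarrow> ('a \<Rightarrow> 'a \<Rightarrow> 'a) \<Rightarrow> bool" where
  "groupoid G m \<longleftrightarrow> (\<forall>x\<in>G. \<forall>y\<in>G. m x y \<in> G)"

definition subgroupoid :: "'a set \<Rightarrow> 'a set \<Rightarrow> ('a \<Rightarrow> 'a \<Rightarrow> 'a) \<Rightarrow> bool" where
  "subgroupoid U G m \<longleftrightarrow> groupoid G m \<and> U \<subseteq> G \<and> (\<forall>u\<in>U. \<forall>v\<in>U. m u v \<in> U)"

definition right_modular :: "'a set \<Rightarrow> ('a \<Rightarrow> 'a \<Rightarrow> 'a) \<Rightarrow> bool" where
  "right_modular G m \<longleftrightarrow> (\<forall>x\<in>G. \<forall>y\<in>G. \<forall>z\<in>G. m (m x y) z = m (m z y) x)"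

definition is_left_identity :: "'a set \<Rightarrow> ('a \<Rightarrow> 'a \<Rightarrow> 'a) \<Rightarrow> 'a \<Rightarrow> bool" where
  "is_left_identity U m e \<longleftrightarrow> e \<in> U \<and> (\<forall>u\<in>U. m e u = u)"

definition partition_family :: "'a set \<Rightarrow> 'a set \<Rightarrow> ('a \<Rightarrow> 'a set) \<Rightarrow> bool" where
  "partition_family G U P \<longleftrightarrow>
     G = (\<Union>u\<in>U. P u) \<and>
     (\<forall>u\<in>U. u \<in> P u) \<and>
     (\<forall>u\<in>U. \<forall>v\<in>U. u \<noteq> v \<longrightarrow> P u \<inter> P v = {})"

definition inflation :: "'a set \<Rightarrow> ('a \<Rightarrow> 'a \<Rightarrow> 'a) \<Rightarrow> 'a set \<Rightarrow> bool" where
  "inflation G m U \<longleftrightarrow> subgroupoid U G m \<and>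
     (\<exists>P. partition_family G U P \<and>
        (\<forall>u\<in>U. \<forall>v\<in>U. \<forall>x\<in>P u. \<forall>y\<in>P v. m x y = m u v))"

text \<open>Generalised inflation: alpha x and beta x are maps U -> U (only their values
  on U matter), constant with value u when x = u is in U.\<close>
definition generalised_inflation :: "'a set \<Rightarrow> ('a \<Rightarrow> 'a \<Rightarrow> 'a) \<Rightarrow> 'a set \<Rightarrow> bool" where
  "generalised_inflation G m U \<longleftrightarrow> subgroupoid U G m \<and>
     (\<exists>P \<alpha> \<beta>. partition_family G U P \<and>
        (\<forall>x\<in>G. \<forall>w\<in>U. \<alpha> x w \<in> U \<and> \<beta> x w \<in> U) \<and>
        (\<forall>u\<in>U. \<forall>v\<in>U. \<forall>x\<in>P u. \<forall>y\<in>P v. m x y = m (\<alpha> x v) (\<beta> y u)) \<and>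
        (\<forall>u\<in>U. \<forall>w\<in>U. \<alpha> u w = u \<and> \<beta> u w = u))"

end

theory Submission
  imports Defs
begin

text \<open>In a generalised inflation every product \<open>xy\<close> already lies in \<open>U\<close>. Right modularity
  together with a left identity \<open>e\<close> of \<open>U\<close> then forces \<open>xy = (ex)(ey)\<close>, so \<open>x \<mapsto> ex\<close> is a
  retraction of \<open>G\<close> onto \<open>U\<close> through which multiplication factors; its fibres exhibit \<open>G\<close> as
  an inflation of \<open>U\<close>.\<close>

lemma generalised_inflation_mult_in_base:
  assumes "generalised_inflation G m U" and "x \<in> G" and "y \<in> G"
  shows "m x y \<in> U"
proof -
  obtain P \<alpha> \<beta> where P: "partition_family G U P"
    and \<alpha>\<beta>: "\<forall>x\<in>G. \<forall>w\<in>U. \<alpha> x w \<in> U \<and> \<beta> x w \<in> U"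
    and mult: "\<forall>u\<in>U. \<forall>v\<in>U. \<forall>x\<in>P u. \<forall>y\<in>P v. m x y = m (\<alpha> x v) (\<beta> y u)"
    and "subgroupoid U G m"
    using assms(1) unfolding generalised_inflation_def by blast
  then have closed: "\<forall>u\<in>U. \<forall>v\<in>U. m u v \<in> U"
    unfolding subgroupoid_def by blast
  obtain u v where "u \<in> U" "x \<in> P u" "v \<in> U" "y \<in> P v"
    using P assms(2,3) unfolding partition_family_def by blast
  then show ?thesis
    using mult \<alpha>\<beta> closed assms(2,3) by auto
qed

lemma right_modular_swap_idempotent:
  assumes "right_modular G m" and "e \<in> G" and "m e e = e" and "c \<in> G"
  shows "m (m c e) e = m e c"
  using assms unfolding right_modular_def by metis

lemma right_modular_mult_factors_through_left_identity:
  assumes rm: "right_modular G m"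
    and UG: "U \<subseteq> G"
    and closed: "\<And>u v. u \<in> U \<Longrightarrow> v \<in> U \<Longrightarrow> m u v \<in> U"
    and mult_in_U: "\<And>x y. x \<in> G \<Longrightarrow> y \<in> G \<Longrightarrow> m x y \<in> U"
    and e: "is_left_identity U m e"
    and x: "x \<in> G" and y: "y \<in> G"
  shows "m x y = m (m e x) (m e y)"
proof -
  have eU: "e \<in> U" and left: "\<And>u. u \<in> U \<Longrightarrow> m e u = u"
    using e unfolding is_left_identity_def by auto
  have eG: "e \<in> G" using eU UG by blast
  have swap: "\<And>x y z. x \<in> G \<Longrightarrow> y \<in> G \<Longrightarrow> z \<in> G \<Longrightarrow> m (m x y) z = m (m z y) x"
    using rm unfolding right_modular_def by blast
  have swap_e: "m (m c e) e = m e c" if "c \<in> G" for c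
    using right_modular_swap_idempotent[OF rm eG _ that] left eU by blast
  have eG_U: "m e z \<in> U" if "z \<in> G" for z
    using mult_in_U eG that by blast
  have right_e: "m z e = m (m e z) e" if z: "z \<in> G" for z
  proof -
    have "m z e \<in> U" using mult_in_U z eG by blast
    then have "m z e = m (m (m z e) e) e"
      using swap_e[of "m z e"] left UG by auto
    also have "\<dots> = m (m e z) e" using swap_e[OF z] by simp
    finally show ?thesis .
  qed
  text \<open>Every \<open>t \<in> U\<close> has the form \<open>we\<close> with \<open>w = te \<in> U\<close>; this lets right modularity
    move the factor \<open>e\<close> onto the right argument.\<close>
  have left_absorbs_e: "m t z = m t (m e z)" if t: "t \<in> U" and z: "z \<in> G" for t z
  proof -
    define w where "w = m t e"
    have wG: "w \<in> G" unfolding w_def using closed t eU UG by blast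
    have t_eq: "m w e = t" unfolding w_def using swap_e[of t] t UG left by auto
    have ezG: "m e z \<in> G" using eG_U z UG by blast
    have "m t z = m (m z e) w" using swap[OF wG eG z] t_eq by simp
    also have "\<dots> = m (m (m e z) e) w" using right_e z by simp
    also have "\<dots> = m t (m e z)" using swap[OF ezG eG wG] t_eq by simp
    finally show ?thesis .
  qed
  have exG: "m e x \<in> G" and eyU: "m e y \<in> U" using eG_U x y UG by auto
  have xyG: "m x y \<in> G" using mult_in_U x y UG by blast
  have "m x y = m e (m x y)" using left mult_in_U x y by simp
  also have "\<dots> = m (m (m x y) e) e" using swap_e[OF xyG] by simp
  also have "\<dots> = m (m (m e y) x) e" using swap[OF x y eG] by simp
  also have "\<dots> = m (m (m e y) (m e x)) e" using left_absorbs_e[OF eyU x] by simp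
  also have "\<dots> = m (m e (m e x)) (m e y)" using swap[OF _ exG eG] eyU UG by auto
  also have "\<dots> = m (m e x) (m e y)" using left eG_U x by simp
  finally show ?thesis .
qed

lemma inflation_of_retraction:
  assumes sub: "subgroupoid U G m"
    and r_range: "\<And>x. x \<in> G \<Longrightarrow> r x \<in> U"
    and r_fix: "\<And>u. u \<in> U \<Longrightarrow> r u = u"
    and mult: "\<And>x y. x \<in> G \<Longrightarrow> y \<in> G \<Longrightarrow> m x y = m (r x) (r y)"
  shows "inflation G m U"
proof -
  define P where "P u = {x \<in> G. r x = u}" for u
  have UG: "U \<subseteq> G" using sub unfolding subgroupoid_def by blast
  have "partition_family G U P"
    unfolding partition_family_def P_def using r_range r_fix UG by auto
  moreover have "\<forall>u\<in>U. \<forall>v\<in>U. \<forall>x\<in>P u. \<forall>y\<in>P v. m x y = m u v"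
    unfolding P_def using mult by auto
  ultimately show ?thesis
    unfolding inflation_def using sub by blast
qed

theorem theorem3:
  fixes G U :: "'a set" and m :: "'a \<Rightarrow> 'a \<Rightarrow> 'a" and e :: 'a
  assumes "generalised_inflation G m U"
    and "right_modular G m"
    and "is_left_identity U m e"
  shows "inflation G m U"
proof -
  have sub: "subgroupoid U G m"
    using assms(1) unfolding generalised_inflation_def by blast
  then have UG: "U \<subseteq> G" and closed: "\<And>u v. u \<in> U \<Longrightarrow> v \<in> U \<Longrightarrow> m u v \<in> U"
    unfolding subgroupoid_def by auto
  have mult_in_U: "\<And>x y. x \<in> G \<Longrightarrow> y \<in> G \<Longrightarrow> m x y \<in> U"
    using generalised_inflation_mult_in_base[OF assms(1)] .
  have "e \<in> U" and "\<And>u. u \<in> U \<Longrightarrow> m e u = u"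
    using assms(3) unfolding is_left_identity_def by auto
  then show ?thesis
    using inflation_of_retraction[OF sub, of "m e"] mult_in_U UG
      right_modular_mult_factors_through_left_identity[OF assms(2) UG closed mult_in_U assms(3)]
    by blast
qed

end
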